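(* Let $\lambda>0$, $\eta\in(0,1)$, $g_l^*>0$ and let $t\ge 1$ be an integer. For a finite instance set $I$ with real gradients $g_i$, let $V(I)=-\frac{\sum_{i\in I}g_i}{|I|+\lambda}$ and define the clipped leaf value $$V_t(I)=V(I)\cdot\min\left(1,\frac{g_l^*(1-\eta)^{t-1}}{|V(I)|}\right)$$ (with $V_t(I)=0$ if $V(I)=0$). Let $\Delta V_t$ be the supremum of $|V_t(I\cup\{s\})-V_t(I)|$ over all finite instance sets $I$ and instances $s\notin I$ such that all gradients involved satisfy $|g_i|\le g_l^*$. Then $$\Delta V_t\le \min\left(\frac{g_l^*}{1+\lambda},\,2g_l^*(1-\eta)^{t-1}\right).$$
   Context: This is the sensitivity of leaf values in the tree of the $t$-th boosting iteration when gradient-based data filtering (discarding instances with $|g_i|>g_l^*$, where $g_l^*=\max_{y_p\in[-1,1]}|\partial l(y_p,y)/\partial y|_{y=0}|$ for the loss $l$) and geometric leaf clipping (clipping leaf values in magnitude to $g_l^*(1-\eta)^{t-1}$, $\eta$ the shrinkage rate) are applied. *)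

theory Defs
  imports Complex_Main
begin

definition leaf_value :: "real \<Rightarrow> ('a \<Rightarrow> real) \<Rightarrow> 'a set \<Rightarrow> real" where
  "leaf_value lam g I = - (\<Sum>i\<in>I. g i) / (real (card I) + lam)"

definition clipped_leaf_value ::
  "real \<Rightarrow> real \<Rightarrow> real \<Rightarrow> nat \<Rightarrow> ('a \<Rightarrow> real) \<Rightarrow> 'a set \<Rightarrow> real" where
  "clipped_leaf_value lam eta gl t g I =
     (let v = leaf_value lam g I in
      if v = 0 then 0 else v * min 1 (gl * (1 - eta) ^ (t - 1) / \<bar>v\<bar>))"

end

theory Submission
  imports Defs
begin

text \<open>Geometric leaf clipping truncates V(I) to the interval [-C, C] with C = gl (1 - eta)^(t-1).
  Truncation is 1-Lipschitz, so the clipped sensitivity is at most the unclipped one, and its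
  range has diameter 2C. Adding an instance s to a set I of n instances changes the unclipped
  value by (sum_I g - g_s (n + lambda)) / ((n + lambda)(n + 1 + lambda)), whose absolute value
  is at most gl (2n + lambda) / ((n + lambda)(n + 1 + lambda)) <= gl / (1 + lambda) since n^2 >= n.\<close>

definition clip :: "real \<Rightarrow> real \<Rightarrow> real" where
  "clip C v = max (- C) (min C v)"

lemma scale_to_bound_eq_clip:
  fixes v C :: real
  assumes "C \<ge> 0"
  shows "(if v = 0 then 0 else v * min 1 (C / \<bar>v\<bar>)) = clip C v"
proof (cases "v = 0")
  case True
  then show ?thesis using assms by (simp add: clip_def)
next
  case False
  show ?thesis
  proof (cases "C \<le> \<bar>v\<bar>")
    case True
    then have "v * min 1 (C / \<bar>v\<bar>) = sgn v * C"
      using \<open>v \<noteq> 0\<close> by (simp add: min_def field_simps sgn_if)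
    then show ?thesis using \<open>v \<noteq> 0\<close> True assms by (auto simp: clip_def sgn_if)
  next
    case False
    then show ?thesis using \<open>v \<noteq> 0\<close> by (auto simp: clip_def min_def field_simps)
  qed
qed

lemma clipped_leaf_value_eq_clip:
  assumes "gl \<ge> 0" and "eta \<le> 1"
  shows "clipped_leaf_value lam eta gl t g I
           = clip (gl * (1 - eta) ^ (t - 1)) (leaf_value lam g I)"
  using scale_to_bound_eq_clip assms
  unfolding clipped_leaf_value_def Let_def by simp

lemma clip_dist_le: "C \<ge> 0 \<Longrightarrow> \<bar>clip C a - clip C b\<bar> \<le> \<bar>a - b\<bar>"
  by (auto simp: clip_def split: split_max split_min)

lemma clip_dist_le_twice_bound: "C \<ge> 0 \<Longrightarrow> \<bar>clip C a - clip C b\<bar> \<le> 2 * C"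
  by (auto simp: clip_def split: split_max split_min)

lemma leaf_value_insert_diff:
  fixes lam :: real and g :: "'a \<Rightarrow> real"
  assumes "lam > 0" and "finite I" and "s \<notin> I"
  shows "leaf_value lam g (insert s I) - leaf_value lam g I
           = ((\<Sum>i\<in>I. g i) - g s * (card I + lam)) / ((card I + lam) * (card I + 1 + lam))"
proof -
  have "real (card I) + lam > 0" using assms(1) by (simp add: add_nonneg_pos)
  moreover have "real (card I) + 1 + lam > 0" using assms(1) by (simp add: add_nonneg_pos)
  ultimately show ?thesis
    using assms(2,3) by (simp add: leaf_value_def field_simps)
qed

lemma sensitivity_ratio_le:
  fixes n :: nat and lam :: real
  assumes "lam > 0"
  shows "(2 * n + lam) / ((n + lam) * (n + 1 + lam)) \<le> 1 / (1 + lam)"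
proof -
  have "real n \<le> real n * real n" by (cases n) auto
  then have "(2 * n + lam) * (1 + lam) \<le> (n + lam) * (n + 1 + lam)"
    by (simp add: algebra_simps)
  moreover have "(n + lam) * (n + 1 + lam) > 0" and "1 + lam > 0"
    using assms by (simp_all add: add_nonneg_pos)
  ultimately show ?thesis by (simp add: divide_simps)
qed

lemma leaf_value_insert_dist_le:
  fixes lam gl :: real and g :: "'a \<Rightarrow> real"
  assumes "lam > 0" and "finite I" and "s \<notin> I"
    and bounded: "\<forall>i\<in>insert s I. \<bar>g i\<bar> \<le> gl"
  shows "\<bar>leaf_value lam g (insert s I) - leaf_value lam g I\<bar> \<le> gl / (1 + lam)"
proof -
  define n where "n = card I"
  have "gl \<ge> 0" using bounded abs_ge_zero order_trans by blast
  have pos: "(n + lam) * (n + 1 + lam) > 0" using assms(1) by (simp add: add_nonneg_pos)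
  have "\<bar>\<Sum>i\<in>I. g i\<bar> \<le> (\<Sum>i\<in>I. \<bar>g i\<bar>)" by (rule sum_abs)
  also have "\<dots> \<le> (\<Sum>i\<in>I. gl)" using bounded by (intro sum_mono) auto
  finally have "\<bar>\<Sum>i\<in>I. g i\<bar> \<le> n * gl" by (simp add: n_def)
  moreover have "\<bar>g s * (n + lam)\<bar> \<le> gl * (n + lam)"
    using bounded assms(1) by (simp add: abs_mult mult_right_mono)
  ultimately have "\<bar>(\<Sum>i\<in>I. g i) - g s * (n + lam)\<bar> \<le> gl * (2 * n + lam)"
    by (simp add: algebra_simps)
  then have "\<bar>leaf_value lam g (insert s I) - leaf_value lam g I\<bar>
               \<le> gl * (2 * n + lam) / ((n + lam) * (n + 1 + lam))"
    using leaf_value_insert_diff[OF assms(1-3)] pos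
    by (simp add: n_def abs_divide divide_right_mono)
  also have "\<dots> \<le> gl * (1 / (1 + lam))"
    using mult_left_mono[OF sensitivity_ratio_le[OF assms(1), of n] \<open>gl \<ge> 0\<close>]
    by (simp add: times_divide_eq_right)
  finally show ?thesis by simp
qed

theorem corollary2:
  fixes lam eta gl :: real and t :: nat
  assumes "lam > 0" and "0 < eta" and "eta < 1" and "gl > 0" and "t \<ge> 1"
  shows "Sup {\<bar>clipped_leaf_value lam eta gl t g (insert s I)
               - clipped_leaf_value lam eta gl t g I\<bar> |
             (I :: 'a set) (s :: 'a) (g :: 'a \<Rightarrow> real).
             finite I \<and> s \<notin> I \<and> (\<forall>i\<in>insert s I. \<bar>g i\<bar> \<le> gl)}
         \<le> min (gl / (1 + lam)) (2 * gl * (1 - eta) ^ (t - 1))"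
    (is "Sup ?D \<le> _")
proof (rule cSup_least)
  show "?D \<noteq> {}"
    using assms(4) by (auto intro!: exI[of _ "{}"] exI[of _ "\<lambda>_. 0"])
next
  define C where "C = gl * (1 - eta) ^ (t - 1)"
  have "C \<ge> 0" using assms by (simp add: C_def)
  fix x assume "x \<in> ?D"
  then obtain I :: "'a set" and s g where "x = \<bar>clipped_leaf_value lam eta gl t g (insert s I)
                                 - clipped_leaf_value lam eta gl t g I\<bar>"
    and hyps: "finite I" "s \<notin> I" "\<forall>i\<in>insert s I. \<bar>g i\<bar> \<le> gl"
    by blast
  moreover have "gl \<ge> 0" and "eta \<le> 1" using assms by simp_all
  ultimately have x: "x = \<bar>clip C (leaf_value lam g (insert s I)) - clip C (leaf_value lam g I)\<bar>"
    unfolding C_def by (simp only: clipped_leaf_value_eq_clip)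
  have "x \<le> gl / (1 + lam)"
    using x clip_dist_le[OF \<open>C \<ge> 0\<close>] leaf_value_insert_dist_le[OF assms(1) hyps]
    by (meson order_trans)
  moreover have "x \<le> 2 * gl * (1 - eta) ^ (t - 1)"
    using x clip_dist_le_twice_bound[OF \<open>C \<ge> 0\<close>] by (simp add: C_def mult.assoc)
  ultimately show "x \<le> min (gl / (1 + lam)) (2 * gl * (1 - eta) ^ (t - 1))" by simp
qed

end
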